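(* Consider the following Markov decision process modelling transmit-power selection in an energy harvesting transmitter. Let $Q_{\max}$ be a positive integer. The state (battery level) at slot $t$ is $Q_t \in \{0,1,\dots,Q_{\max}\}$. In state $Q$ the allowed actions (transmit power levels) form a set $\mathcal{A}_Q \subseteq \{0,1,\dots,Q\}$, where $\mathcal{A}_0=\{0\}$ and, for $Q\ge 1$, every allowed action is positive, i.e. $\mathcal{A}_Q\subseteq\{1,\dots,Q\}$. The harvested energies $p_0,p_1,\dots$ are i.i.d. nonnegative integer random variables with $\Pr\{p_t=p\}>0$ for every $p\in\{0,1,\dots,Q_{\max}\}$. If action $q_t\in\mathcal{A}_{Q_t}$ is taken, the next state is $Q_{t+1}=\min\{Q_t-q_t+p_t,\;Q_{\max}\}$. Then this MDP is ergodic: for every deterministic stationary policy $\beta$ (a map assigning to each state $Q$ an action $\beta(Q)\in\mathcal{A}_Q$), the Markov chain of states induced by playing $\beta$ is irreducible and aperiodic. *)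

theory Defs
  imports "HOL-Probability.Probability_Mass_Function"
begin

definition eh_kernel :: "nat \<Rightarrow> nat pmf \<Rightarrow> (nat \<Rightarrow> nat) \<Rightarrow> nat \<Rightarrow> nat pmf" where
  "eh_kernel Qmax h beta Q = map_pmf (\<lambda>p. min (Q - beta Q + p) Qmax) h"

fun n_step :: "('s \<Rightarrow> 's pmf) \<Rightarrow> nat \<Rightarrow> 's \<Rightarrow> 's pmf" where
  "n_step K 0 i = return_pmf i"
| "n_step K (Suc n) i = bind_pmf (n_step K n i) K"

definition irreducible_on :: "'s set \<Rightarrow> ('s \<Rightarrow> 's pmf) \<Rightarrow> bool" where
  "irreducible_on S K \<longleftrightarrow> (\<forall>i\<in>S. \<forall>j\<in>S. \<exists>n>0. pmf (n_step K n i) j > 0)"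

definition period :: "('s \<Rightarrow> 's pmf) \<Rightarrow> 's \<Rightarrow> nat" where
  "period K i = Gcd {n. n > 0 \<and> pmf (n_step K n i) i > 0}"

definition aperiodic_on :: "'s set \<Rightarrow> ('s \<Rightarrow> 's pmf) \<Rightarrow> bool" where
  "aperiodic_on S K \<longleftrightarrow> (\<forall>i\<in>S. period K i = 1)"

end

theory Submission
  imports Defs
begin

text \<open>Every state can drain the battery to level 0 with positive probability (each action
  spends at least one unit whenever the battery is nonempty, and harvesting nothing has positive probability),
  and from level 0 every state, including 0 itself, is reached in one step. A chain in which
  some state is reachable from everywhere and reaches everything, itself included, in one
  step is irreducible, and it is aperiodic because each state has return times n + 1 and
  n + 2 for some n.\<close>

lemma n_step_one [simp]: "n_step K 1 i = K i"
  by (simp add: bind_return_pmf)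

lemma set_pmf_n_step_add:
  assumes "j \<in> set_pmf (n_step K n i)" and "k \<in> set_pmf (n_step K m j)"
  shows "k \<in> set_pmf (n_step K (n + m) i)"
  using assms(2)
proof (induction m arbitrary: k)
  case 0
  then show ?case using assms(1) by simp
next
  case (Suc m)
  then obtain l where "l \<in> set_pmf (n_step K m j)" "k \<in> set_pmf (K l)" by auto
  then show ?case using Suc.IH by auto
qed

lemma period_eq_1_if_consecutive_returns:
  assumes "pmf (n_step K n i) i > 0" and "pmf (n_step K (Suc n) i) i > 0" and "n > 0"
  shows "period K i = 1"
proof -
  let ?R = "{n. n > 0 \<and> pmf (n_step K n i) i > 0}"
  have "Gcd ?R dvd n" "Gcd ?R dvd Suc n"
    using assms by (auto intro: Gcd_dvd)
  then have "Gcd ?R dvd Suc n - n"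
    by (rule dvd_diff_nat[rotated])
  then show ?thesis unfolding period_def by simp
qed

lemma irreducible_on_if_hub:
  assumes reach_hub: "\<And>i. i \<in> S \<Longrightarrow> \<exists>n. s \<in> set_pmf (n_step K n i)"
    and hub_step: "\<And>j. j \<in> S \<Longrightarrow> j \<in> set_pmf (K s)"
  shows "irreducible_on S K"
  unfolding irreducible_on_def pmf_positive_iff
proof (intro ballI)
  fix i j assume "i \<in> S" "j \<in> S"
  then obtain n where "s \<in> set_pmf (n_step K n i)" using reach_hub by blast
  moreover have "j \<in> set_pmf (n_step K 1 s)" using hub_step[OF \<open>j \<in> S\<close>] by simp
  ultimately have "j \<in> set_pmf (n_step K (n + 1) i)" by (rule set_pmf_n_step_add)
  then show "\<exists>n>0. j \<in> set_pmf (n_step K n i)" by (intro exI[of _ "n + 1"]) simp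
qed

lemma aperiodic_on_if_hub:
  assumes reach_hub: "\<And>i. i \<in> S \<Longrightarrow> \<exists>n. s \<in> set_pmf (n_step K n i)"
    and hub_step: "\<And>j. j \<in> S \<Longrightarrow> j \<in> set_pmf (K s)"
    and hub_loop: "s \<in> set_pmf (K s)"
  shows "aperiodic_on S K"
  unfolding aperiodic_on_def
proof
  fix i assume "i \<in> S"
  then obtain n where n: "s \<in> set_pmf (n_step K n i)" using reach_hub by blast
  have step: "i \<in> set_pmf (n_step K 1 s)" using hub_step[OF \<open>i \<in> S\<close>] by simp
  have loop: "s \<in> set_pmf (n_step K 1 s)" using hub_loop by simp
  have "pmf (n_step K (n + 1) i) i > 0"
    unfolding pmf_positive_iff by (rule set_pmf_n_step_add[OF n step])
  moreover have "pmf (n_step K (Suc (n + 1)) i) i > 0"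
    unfolding pmf_positive_iff Suc_eq_plus1
    by (rule set_pmf_n_step_add[OF set_pmf_n_step_add[OF n loop] step])
  ultimately show "period K i = 1"
    by (rule period_eq_1_if_consecutive_returns) simp
qed

lemma set_pmf_eh_kernel:
  assumes "\<And>p. p \<le> Qmax \<Longrightarrow> pmf h p > 0" and "j \<le> Qmax" and "Q - beta Q \<le> j"
  shows "j \<in> set_pmf (eh_kernel Qmax h beta Q)"
proof -
  have "j - (Q - beta Q) \<in> set_pmf h"
    using assms by (simp add: pmf_positive_iff)
  moreover have "j = min (Q - beta Q + (j - (Q - beta Q))) Qmax"
    using assms by simp
  ultimately show ?thesis unfolding eh_kernel_def by auto
qed

lemma eh_kernel_reaches_empty_battery:
  assumes h_pos: "\<And>p. p \<le> Qmax \<Longrightarrow> pmf h p > 0"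
    and spends: "\<And>Q. 1 \<le> Q \<Longrightarrow> Q \<le> Qmax \<Longrightarrow> 1 \<le> beta Q"
    and "Q \<le> Qmax"
  shows "\<exists>n. 0 \<in> set_pmf (n_step (eh_kernel Qmax h beta) n Q)"
  using \<open>Q \<le> Qmax\<close>
proof (induction Q rule: less_induct)
  case (less Q)
  show ?case
  proof (cases "Q = 0")
    case True
    then have "0 \<in> set_pmf (n_step (eh_kernel Qmax h beta) 0 Q)" by simp
    then show ?thesis by blast
  next
    case False
    then have "Q - beta Q < Q" using spends[of Q] less.prems by simp
    moreover have "Q - beta Q \<le> Qmax" using less.prems by simp
    ultimately obtain n where n: "0 \<in> set_pmf (n_step (eh_kernel Qmax h beta) n (Q - beta Q))"
      by (blast dest: less.IH)
    have "Q - beta Q \<in> set_pmf (n_step (eh_kernel Qmax h beta) 1 Q)"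
      using set_pmf_eh_kernel[OF h_pos] less.prems by simp
    from set_pmf_n_step_add[OF this n] show ?thesis by blast
  qed
qed

theorem proposition1:
  fixes Qmax :: nat
    and A :: "nat \<Rightarrow> nat set"
    and h :: "nat pmf"
    and beta :: "nat \<Rightarrow> nat"
  assumes Qmax_pos: "Qmax > 0"
    and A0: "A 0 = {0}"
    and A_pos: "\<And>Q. 1 \<le> Q \<Longrightarrow> Q \<le> Qmax \<Longrightarrow> A Q \<subseteq> {1..Q}"
    and h_pos: "\<And>p. p \<le> Qmax \<Longrightarrow> pmf h p > 0"
    and beta_allowed: "\<And>Q. Q \<le> Qmax \<Longrightarrow> beta Q \<in> A Q"
  shows "irreducible_on {0..Qmax} (eh_kernel Qmax h beta)
       \<and> aperiodic_on {0..Qmax} (eh_kernel Qmax h beta)"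
proof -
  have spends: "1 \<le> beta Q" if "1 \<le> Q" "Q \<le> Qmax" for Q
    using A_pos[OF that] beta_allowed[OF that(2)] by auto
  have reach_empty: "\<exists>n. 0 \<in> set_pmf (n_step (eh_kernel Qmax h beta) n i)"
    if "i \<in> {0..Qmax}" for i
    using eh_kernel_reaches_empty_battery[OF h_pos spends] that by simp
  have from_empty: "j \<in> set_pmf (eh_kernel Qmax h beta 0)" if "j \<in> {0..Qmax}" for j
    using set_pmf_eh_kernel[OF h_pos] that by simp
  show ?thesis
    using irreducible_on_if_hub[of "{0..Qmax}", OF reach_empty from_empty]
      aperiodic_on_if_hub[of "{0..Qmax}", OF reach_empty from_empty from_empty] by simp
qed

end
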